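(* Let $\mathcal{M}=\mathbb{R}^{d_{\mathbb E}}\times\mathbb{S}^{d_{\mathbb S}}\times\mathbb{H}^{d_{\mathbb H}}$ be a product space form with spherical curvature $C_{\mathbb S}>0$, hyperbolic curvature $C_{\mathbb H}<0$, and fixed positive weights $\alpha_{\mathbb E},\alpha_{\mathbb S},\alpha_{\mathbb H}$. Then the VC dimension of the class of linear classifiers on $\mathcal{M}$ (defined below) is at least $\dim(\mathcal{M})+1=d_{\mathbb E}+d_{\mathbb S}+d_{\mathbb H}+1$.
   Context: Space forms have dimension at least $2$. $\mathbb{S}^{d}=\{x\in\mathbb{R}^{d+1}:\langle x,x\rangle=C_{\mathbb S}^{-1}\}$ with $\langle\cdot,\cdot\rangle$ the dot product; $\mathbb{H}^{d}=\{x\in\mathbb{R}^{d+1}:[x,x]=C_{\mathbb H}^{-1},x_1>0\}$ with $[u,v]=u^\top Hv$, $H=\mathrm{diag}(-1,1,\dots,1)$. A point of $\mathcal{M}$ is written $x=(x_{\mathbb E},x_{\mathbb S},x_{\mathbb H})$. A linear classifier on $\mathcal{M}$ is a map $x\mapsto\mathrm{sgn}\big(\langle w_{\mathbb E},x_{\mathbb E}\rangle+\alpha_{\mathbb S}\,\mathrm{asin}(\langle w_{\mathbb S},x_{\mathbb S}\rangle)+\alpha_{\mathbb H}\,\mathrm{asinh}([w_{\mathbb H},x_{\mathbb H}])+b\big)$ with parameters $w_{\mathbb E}\in\mathbb{R}^{d_{\mathbb E}}$, $\|w_{\mathbb E}\|_2=\alpha_{\mathbb E}$, $w_{\mathbb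 S}\in\mathbb{R}^{d_{\mathbb S}+1}$, $\langle w_{\mathbb S},w_{\mathbb S}\rangle=C_{\mathbb S}$, $w_{\mathbb H}\in\mathbb{R}^{d_{\mathbb H}+1}$, $[w_{\mathbb H},w_{\mathbb H}]=-C_{\mathbb H}$, $b\in\mathbb{R}$. *)

theory Defs
  imports Complex_Main
begin

text \<open>Vectors in R^n are represented as functions nat => real that vanish
  at indices >= n (coordinates 0..n-1).\<close>

definition vzero_beyond :: "nat \<Rightarrow> (nat \<Rightarrow> real) \<Rightarrow> bool" where
  "vzero_beyond n u \<longleftrightarrow> (\<forall>i\<ge>n. u i = 0)"

definition dotp :: "nat \<Rightarrow> (nat \<Rightarrow> real) \<Rightarrow> (nat \<Rightarrow> real) \<Rightarrow> real" where
  "dotp n u v = (\<Sum>i<n. u i * v i)"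

text \<open>Minkowski product [u,v] = u^T H v on R^n, H = diag(-1,1,...,1);
  coordinate 0 is the first (time-like) coordinate x_1 of the paper.\<close>
definition mink :: "nat \<Rightarrow> (nat \<Rightarrow> real) \<Rightarrow> (nat \<Rightarrow> real) \<Rightarrow> real" where
  "mink n u v = - u 0 * v 0 + (\<Sum>i\<in>{1..<n}. u i * v i)"

definition sphere_form :: "nat \<Rightarrow> real \<Rightarrow> (nat \<Rightarrow> real) set" where
  "sphere_form d C = {x. vzero_beyond (d+1) x \<and> dotp (d+1) x x = 1 / C}"

definition hyp_form :: "nat \<Rightarrow> real \<Rightarrow> (nat \<Rightarrow> real) set" where
  "hyp_form d C = {x. vzero_beyond (d+1) x \<and> mink (d+1) x x = 1 / C \<and> x 0 > 0}"

definition prod_space_form ::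
  "nat \<Rightarrow> nat \<Rightarrow> real \<Rightarrow> nat \<Rightarrow> real \<Rightarrow> ((nat \<Rightarrow> real) \<times> (nat \<Rightarrow> real) \<times> (nat \<Rightarrow> real)) set" where
  "prod_space_form dE dS CS dH CH =
     {(xE, xS, xH). vzero_beyond dE xE \<and> xS \<in> sphere_form dS CS \<and> xH \<in> hyp_form dH CH}"

definition linear_classifiers ::
  "nat \<Rightarrow> nat \<Rightarrow> real \<Rightarrow> nat \<Rightarrow> real \<Rightarrow> real \<Rightarrow> real \<Rightarrow> real \<Rightarrow>
   (((nat \<Rightarrow> real) \<times> (nat \<Rightarrow> real) \<times> (nat \<Rightarrow> real)) \<Rightarrow> real) set" where
  "linear_classifiers dE dS CS dH CH aE aS aH =
     {h. \<exists>wE wS wH b.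
           sqrt (dotp dE wE wE) = aE \<and>
           dotp (dS+1) wS wS = CS \<and>
           mink (dH+1) wH wH = - CH \<and>
           h = (\<lambda>(xE, xS, xH). sgn (dotp dE wE xE + aS * arcsin (dotp (dS+1) wS xS)
                                   + aH * arsinh (mink (dH+1) wH xH) + b))}"

definition shatters :: "('a \<Rightarrow> real) set \<Rightarrow> 'a set \<Rightarrow> bool" where
  "shatters H X \<longleftrightarrow>
     (\<forall>y. (\<forall>x\<in>X. y x = 1 \<or> y x = -1) \<longrightarrow> (\<exists>h\<in>H. \<forall>x\<in>X. h x = y x))"

definition vc_dim_at_least :: "('a \<Rightarrow> real) set \<Rightarrow> 'a set \<Rightarrow> nat \<Rightarrow> bool" where
  "vc_dim_at_least H D k \<longleftrightarrow> (\<exists>X\<subseteq>D. finite X \<and> card X = k \<and> shatters H X)"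

end

theory Submission
  imports Defs
begin

text \<open>The shattered set consists of the standard basis vectors of the Euclidean factor, the
  points of the sphere on its coordinate axes \<open>1, \<dots>, dS\<close>, and points of the hyperboloid in
  the coordinate planes spanned by the time axis and axis \<open>j\<close>, each completed by a common
  base point in the other two factors, together with the base point itself. Given labels, take
  in every factor the weight vector whose \<open>j\<close>-th coordinate is the label of the \<open>j\<close>-th point
  times a constant. Since arcsin and arsinh are odd, the score before the bias is then
  \<open>\<pm>K\<^sub>F\<close> at the points of factor \<open>F\<close>, with the label as sign, and \<open>0\<close> at the base point;
  a bias of absolute value below every \<open>K\<^sub>F\<close> with the sign of the base point's label realises
  the labelling.\<close>

lemma vc_dim_at_leastI:
  fixes P :: "nat \<Rightarrow> 'a"
  assumes "P ` {..<k} \<subseteq> D"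
    and labels: "\<And>z. \<forall>n<k. z n = 1 \<or> z n = -1 \<Longrightarrow> \<exists>h\<in>H. \<forall>n<k. h (P n) = z n"
  shows "vc_dim_at_least H D k"
proof -
  have "inj_on P {..<k}"
  proof (rule inj_onI)
    fix m n assume m: "m \<in> {..<k}" and n: "n \<in> {..<k}" and "P m = P n"
    have "\<exists>h\<in>H. \<forall>i<k. h (P i) = (if i = m then 1 else -1)"
      by (rule labels) simp
    then obtain h :: "'a \<Rightarrow> real" where h: "\<forall>i<k. h (P i) = (if i = m then 1 else -1)"
      by blast
    have "h (P n) = h (P m)"
      using \<open>P m = P n\<close> by simp
    also have "\<dots> = 1"
      using h m by simp
    finally show "m = n"
      using h n by (auto split: if_splits)
  qed
  then have "card (P ` {..<k}) = k"
    by (simp add: card_image)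
  moreover have "shatters H (P ` {..<k})"
    unfolding shatters_def
  proof (intro allI impI)
    fix y :: "'a \<Rightarrow> real" assume "\<forall>x\<in>P ` {..<k}. y x = 1 \<or> y x = -1"
    then show "\<exists>h\<in>H. \<forall>x\<in>P ` {..<k}. h x = y x"
      using labels[of "\<lambda>n. y (P n)"] by auto
  qed
  ultimately show ?thesis
    unfolding vc_dim_at_least_def using assms(1) by blast
qed

lemma sgn_sign_mult_add:
  fixes s K b :: real
  assumes "s = 1 \<or> s = -1" and "\<bar>b\<bar> < K"
  shows "sgn (s * K + b) = s"
  using assms by (auto simp: sgn_if)

lemma odd_fun_sign_mult:
  fixes f :: "real \<Rightarrow> real"
  assumes "s = 1 \<or> s = -1" and "f (- x) = - f x"
  shows "f (s * x) = s * f x"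
  using assms by auto

lemma bias_below_margins:
  fixes M :: "real set" and s :: real
  assumes "finite M" and "\<forall>k\<in>M. k > 0" and "s = 1 \<or> s = -1"
  obtains b where "\<forall>k\<in>M. \<bar>b\<bar> < k" and "sgn b = s"
proof -
  define K where "K = Min (insert 1 M)"
  have "K > 0" and "\<forall>k\<in>M. K \<le> k"
    using assms(1,2) by (simp_all add: K_def)
  then show thesis
    using assms(3) by (intro that[of "s * (K / 2)"]) (auto simp: abs_mult sgn_mult)
qed

lemma sum_signed_squares:
  fixes s :: "nat \<Rightarrow> real"
  assumes "\<forall>j<d. s j = 1 \<or> s j = -1"
  shows "(\<Sum>j<d. (s j * r) * (s j * r)) = real d * r\<^sup>2"
proof -
  have "(\<Sum>j<d. (s j * r) * (s j * r)) = (\<Sum>j<d. r\<^sup>2)"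
    using assms by (intro sum.cong) (auto simp: power2_eq_square)
  then show ?thesis by simp
qed

lemma dotp_Suc_shift: "dotp (d+1) u v = u 0 * v 0 + (\<Sum>j<d. u (Suc j) * v (Suc j))"
  unfolding dotp_def by (simp only: Suc_eq_plus1[symmetric] sum.lessThan_Suc_shift)

lemma mink_Suc_shift: "mink (d+1) u v = - u 0 * v 0 + (\<Sum>j<d. u (Suc j) * v (Suc j))"
proof -
  have "(\<Sum>i\<in>{1..<d+1}. f i) = (\<Sum>j<d. f (Suc j))" for f :: "nat \<Rightarrow> real"
    by (metis One_nat_def Suc_eq_plus1 atLeast0LessThan sum.shift_bounds_Suc_ivl)
  then show ?thesis
    unfolding mink_def by (rule arg_cong)
qed

definition axis_vec :: "nat \<Rightarrow> real \<Rightarrow> nat \<Rightarrow> real" where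
  "axis_vec j c = (\<lambda>i. if i = j then c else 0)"

lemma dotp_axis_vec: "dotp n u (axis_vec j c) = (if j < n then u j * c else 0)"
  unfolding dotp_def axis_vec_def by (simp add: if_distrib cong: if_cong)

lemma dotp_zero_right: "dotp n u (\<lambda>_. 0) = 0"
  unfolding dotp_def by simp

definition sphere_point :: "real \<Rightarrow> nat \<Rightarrow> nat \<Rightarrow> real" where
  "sphere_point C j = axis_vec j (sqrt (1 / C))"

text \<open>For \<open>j \<ge> 1\<close> the time coordinate \<open>\<surd>2 a\<close>, \<open>a = \<surd>(-1/C)\<close>, makes the Minkowski square
  \<open>-2a\<^sup>2 + a\<^sup>2 = 1/C\<close>.\<close>
definition hyp_point :: "real \<Rightarrow> nat \<Rightarrow> nat \<Rightarrow> real" where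
  "hyp_point C j = (\<lambda>i. if i = 0 then (if j = 0 then 1 else sqrt 2) * sqrt (-1 / C)
                        else if i = j then sqrt (-1 / C) else 0)"

lemma mink_hyp_point:
  assumes "u 0 = 0"
  shows "mink n u (hyp_point C j) = (if 1 \<le> j \<and> j < n then u j * sqrt (-1 / C) else 0)"
proof -
  have "(\<Sum>i\<in>{1..<n}. u i * hyp_point C j i)
      = (\<Sum>i\<in>{1..<n}. if i = j then u j * sqrt (-1 / C) else 0)"
    unfolding hyp_point_def by (intro sum.cong) auto
  then show ?thesis
    unfolding mink_def using assms by simp
qed

lemma sphere_point_mem:
  assumes "C > 0" and "j \<le> d"
  shows "sphere_point C j \<in> sphere_form d C"
proof -
  have "dotp (d+1) (sphere_point C j) (sphere_point C j) = 1 / C"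
    using assms unfolding sphere_point_def by (simp add: dotp_axis_vec) (simp add: axis_vec_def)
  then show ?thesis
    using assms unfolding sphere_form_def vzero_beyond_def
    by (simp add: sphere_point_def axis_vec_def)
qed

lemma hyp_point_mem:
  assumes "C < 0" and "j \<le> d"
  shows "hyp_point C j \<in> hyp_form d C"
proof -
  have "(\<Sum>i\<in>{1..<d+1}. hyp_point C j i * hyp_point C j i)
      = (\<Sum>i\<in>{1..<d+1}. if i = j then -1 / C else 0)"
    using assms(1) unfolding hyp_point_def by (intro sum.cong) auto
  then have "mink (d+1) (hyp_point C j) (hyp_point C j) = 1 / C"
    using assms unfolding mink_def hyp_point_def by (auto simp: field_simps)
  moreover have "hyp_point C j 0 > 0"
    using assms(1) unfolding hyp_point_def by simp
  ultimately show ?thesis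
    using assms(2) unfolding hyp_form_def hyp_point_def vzero_beyond_def by auto
qed

lemma euclidean_weight_exists:
  assumes "d > 0" and "\<alpha> \<ge> 0" and "\<forall>j<d. s j = 1 \<or> s j = -1"
  obtains w where "sqrt (dotp d w w) = \<alpha>"
    and "\<forall>j<d. dotp d w (axis_vec j 1) = s j * (\<alpha> / sqrt d)"
proof
  define w where "w i = s i * (\<alpha> / sqrt d)" for i
  have "dotp d w w = real d * (\<alpha> / sqrt d)\<^sup>2"
    unfolding dotp_def w_def by (rule sum_signed_squares[OF assms(3)])
  then show "sqrt (dotp d w w) = \<alpha>"
    using assms(1,2) by (simp add: power_divide)
  show "\<forall>j<d. dotp d w (axis_vec j 1) = s j * (\<alpha> / sqrt d)"
    by (simp add: dotp_axis_vec w_def)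
qed

lemma sphere_weight_exists:
  assumes "d > 0" and "C > 0" and "\<forall>j<d. s j = 1 \<or> s j = -1"
  obtains w where "dotp (d+1) w w = C"
    and "dotp (d+1) w (sphere_point C 0) = 0"
    and "\<forall>j<d. dotp (d+1) w (sphere_point C (Suc j)) = s j * sqrt (1 / d)"
proof
  define r where "r = sqrt (C / d)"
  define w where "w i = (case i of 0 \<Rightarrow> 0 | Suc j \<Rightarrow> s j * r)" for i
  have "dotp (d+1) w w = real d * r\<^sup>2"
    unfolding dotp_Suc_shift w_def using sum_signed_squares[OF assms(3)] by simp
  then show "dotp (d+1) w w = C"
    using assms(1,2) by (simp add: r_def)
  show "dotp (d+1) w (sphere_point C 0) = 0"
    by (simp add: sphere_point_def dotp_axis_vec w_def)
  show "\<forall>j<d. dotp (d+1) w (sphere_point C (Suc j)) = s j * sqrt (1 / d)"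
    using assms(2) by (simp add: sphere_point_def dotp_axis_vec w_def r_def real_sqrt_mult[symmetric])
qed

lemma hyperbolic_weight_exists:
  assumes "d > 0" and "C < 0" and "\<forall>j<d. s j = 1 \<or> s j = -1"
  obtains w where "mink (d+1) w w = - C"
    and "mink (d+1) w (hyp_point C 0) = 0"
    and "\<forall>j<d. mink (d+1) w (hyp_point C (Suc j)) = s j * sqrt (1 / d)"
proof
  define r where "r = sqrt (- C / d)"
  define w where "w i = (case i of 0 \<Rightarrow> 0 | Suc j \<Rightarrow> s j * r)" for i
  have "mink (d+1) w w = real d * r\<^sup>2"
    unfolding mink_Suc_shift w_def using sum_signed_squares[OF assms(3)] by simp
  moreover have "r\<^sup>2 = - C / d"
    unfolding r_def using assms(1,2) by (simp add: divide_nonpos_pos)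
  ultimately show "mink (d+1) w w = - C"
    using assms(1) by simp
  show "mink (d+1) w (hyp_point C 0) = 0"
    by (simp add: mink_hyp_point w_def)
  show "\<forall>j<d. mink (d+1) w (hyp_point C (Suc j)) = s j * sqrt (1 / d)"
    using assms(2) by (simp add: mink_hyp_point w_def r_def real_sqrt_mult[symmetric])
qed

definition shattered_point ::
  "nat \<Rightarrow> nat \<Rightarrow> real \<Rightarrow> nat \<Rightarrow> real \<Rightarrow> nat \<Rightarrow> (nat \<Rightarrow> real) \<times> (nat \<Rightarrow> real) \<times> (nat \<Rightarrow> real)"
where
  "shattered_point dE dS CS dH CH n =
     (if n < dE then (axis_vec n 1, sphere_point CS 0, hyp_point CH 0)
      else if n < dE + dS then (\<lambda>_. 0, sphere_point CS (Suc (n - dE)), hyp_point CH 0)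
      else if n < dE + dS + dH then (\<lambda>_. 0, sphere_point CS 0, hyp_point CH (Suc (n - dE - dS)))
      else (\<lambda>_. 0, sphere_point CS 0, hyp_point CH 0))"

lemma shattered_point_mem:
  assumes "CS > 0" and "CH < 0"
  shows "shattered_point dE dS CS dH CH n \<in> prod_space_form dE dS CS dH CH"
  using assms sphere_point_mem[of CS] hyp_point_mem[of CH]
  unfolding shattered_point_def prod_space_form_def
  by (auto simp: vzero_beyond_def axis_vec_def)

definition product_score ::
  "nat \<Rightarrow> nat \<Rightarrow> nat \<Rightarrow> real \<Rightarrow> real \<Rightarrow> (nat \<Rightarrow> real) \<Rightarrow> (nat \<Rightarrow> real) \<Rightarrow> (nat \<Rightarrow> real) \<Rightarrow>
   (nat \<Rightarrow> real) \<times> (nat \<Rightarrow> real) \<times> (nat \<Rightarrow> real) \<Rightarrow> real"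
where
  "product_score dE dS dH aS aH wE wS wH = (\<lambda>(xE, xS, xH).
     dotp dE wE xE + aS * arcsin (dotp (dS+1) wS xS) + aH * arsinh (mink (dH+1) wH xH))"

lemma product_score_classifier_mem:
  assumes "sqrt (dotp dE wE wE) = aE" and "dotp (dS+1) wS wS = CS" and "mink (dH+1) wH wH = - CH"
  shows "(\<lambda>x. sgn (product_score dE dS dH aS aH wE wS wH x + b))
           \<in> linear_classifiers dE dS CS dH CH aE aS aH"
  unfolding linear_classifiers_def using assms
  by (intro CollectI exI[of _ wE] exI[of _ wS] exI[of _ wH] exI[of _ b])
    (auto simp: product_score_def)

lemma shattered_point_weights_exist:
  fixes aS aH :: real
  assumes "dE > 0" and "dS > 0" and "dH > 0" and "CS > 0" and "CH < 0" and "aE \<ge> 0"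
    and z: "\<forall>n<dE+dS+dH. z n = 1 \<or> z n = -1"
  defines "score \<equiv> \<lambda>wE wS wH n. product_score dE dS dH aS aH wE wS wH (shattered_point dE dS CS dH CH n)"
  obtains wE wS wH
  where "sqrt (dotp dE wE wE) = aE" and "dotp (dS+1) wS wS = CS" and "mink (dH+1) wH wH = - CH"
    and "\<And>n. n < dE \<Longrightarrow> score wE wS wH n = z n * (aE / sqrt dE)"
    and "\<And>n. dE \<le> n \<Longrightarrow> n < dE + dS \<Longrightarrow>
           score wE wS wH n = z n * (aS * arcsin (sqrt (1 / dS)))"
    and "\<And>n. dE + dS \<le> n \<Longrightarrow> n < dE + dS + dH \<Longrightarrow>
           score wE wS wH n = z n * (aH * arsinh (sqrt (1 / dH)))"
    and "score wE wS wH (dE + dS + dH) = 0"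
proof -
  obtain wE where wE: "sqrt (dotp dE wE wE) = aE"
      "\<forall>j<dE. dotp dE wE (axis_vec j 1) = z j * (aE / sqrt dE)"
    using euclidean_weight_exists[of dE aE z] assms by auto
  obtain wS where wS: "dotp (dS+1) wS wS = CS" "dotp (dS+1) wS (sphere_point CS 0) = 0"
      "\<forall>j<dS. dotp (dS+1) wS (sphere_point CS (Suc j)) = z (dE + j) * sqrt (1 / dS)"
    using sphere_weight_exists[of dS CS "\<lambda>j. z (dE + j)"] assms by auto
  obtain wH where wH: "mink (dH+1) wH wH = - CH" "mink (dH+1) wH (hyp_point CH 0) = 0"
      "\<forall>j<dH. mink (dH+1) wH (hyp_point CH (Suc j)) = z (dE + dS + j) * sqrt (1 / dH)"
    using hyperbolic_weight_exists[of dH CH "\<lambda>j. z (dE + dS + j)"] assms by auto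
  show thesis
  proof (rule that[OF wE(1) wS(1) wH(1)])
    show "score wE wS wH n = z n * (aE / sqrt dE)" if "n < dE" for n
      using that wE(2) wS(2) wH(2)
      by (simp add: score_def product_score_def shattered_point_def dotp_zero_right)
    show "score wE wS wH n = z n * (aS * arcsin (sqrt (1 / dS)))"
      if "dE \<le> n" "n < dE + dS" for n
    proof -
      have "arcsin (z n * sqrt (1 / dS)) = z n * arcsin (sqrt (1 / dS))"
        using z that assms(2)
        by (intro odd_fun_sign_mult arcsin_minus) (auto intro: order_trans[of _ 0])
      then show ?thesis
        using that wH(2) wS(3)[rule_format, of "n - dE"]
        by (simp add: score_def product_score_def shattered_point_def dotp_zero_right)
    qed
    show "score wE wS wH n = z n * (aH * arsinh (sqrt (1 / dH)))"
      if "dE + dS \<le> n" "n < dE + dS + dH" for n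
    proof -
      have "arsinh (z n * sqrt (1 / dH)) = z n * arsinh (sqrt (1 / dH))"
        using z that by (intro odd_fun_sign_mult arsinh_minus_real) auto
      then show ?thesis
        using that wS(2) wH(3)[rule_format, of "n - dE - dS"]
        by (simp add: score_def product_score_def shattered_point_def dotp_zero_right)
    qed
    show "score wE wS wH (dE + dS + dH) = 0"
      using wS(2) wH(2) by (simp add: score_def product_score_def shattered_point_def dotp_zero_right)
  qed
qed

lemma shattered_point_labels_realised:
  assumes "dE > 0" and "dS > 0" and "dH > 0" and "CS > 0" and "CH < 0"
    and "aE > 0" and "aS > 0" and "aH > 0"
    and z: "\<forall>n<dE+dS+dH+1. z n = 1 \<or> z n = -1"
  shows "\<exists>h\<in>linear_classifiers dE dS CS dH CH aE aS aH.
           \<forall>n<dE+dS+dH+1. h (shattered_point dE dS CS dH CH n) = z n"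
proof -
  define P where "P = shattered_point dE dS CS dH CH"
  define kE kS kH where "kE = aE / sqrt dE" and "kS = aS * arcsin (sqrt (1 / dS))"
    and "kH = aH * arsinh (sqrt (1 / dH))"
  obtain wE wS wH where norms: "sqrt (dotp dE wE wE) = aE" "dotp (dS+1) wS wS = CS"
      "mink (dH+1) wH wH = - CH"
    and score: "\<And>n. n < dE \<Longrightarrow> product_score dE dS dH aS aH wE wS wH (P n) = z n * kE"
      "\<And>n. dE \<le> n \<Longrightarrow> n < dE + dS \<Longrightarrow>
         product_score dE dS dH aS aH wE wS wH (P n) = z n * kS"
      "\<And>n. dE + dS \<le> n \<Longrightarrow> n < dE + dS + dH \<Longrightarrow>
         product_score dE dS dH aS aH wE wS wH (P n) = z n * kH"
      "product_score dE dS dH aS aH wE wS wH (P (dE + dS + dH)) = 0"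
    using shattered_point_weights_exist[of dE dS dH CS CH aE z aS aH] assms
    unfolding P_def kE_def kS_def kH_def by auto
  have "kE > 0" "kS > 0" "kH > 0"
    using assms arcsin_less_arcsin[of 0 "sqrt (1 / dS)"] by (simp_all add: kE_def kS_def kH_def)
  then obtain b where b: "\<forall>k\<in>{kE, kS, kH}. \<bar>b\<bar> < k" and "sgn b = z (dE + dS + dH)"
    using bias_below_margins[of "{kE, kS, kH}" "z (dE + dS + dH)"] z by auto
  define h where "h x = sgn (product_score dE dS dH aS aH wE wS wH x + b)" for x
  have "h \<in> linear_classifiers dE dS CS dH CH aE aS aH"
    unfolding h_def using norms by (rule product_score_classifier_mem)
  moreover have "h (P n) = z n" if n: "n < dE + dS + dH + 1" for n
  proof -
    have zn: "z n = 1 \<or> z n = -1"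
      using z n by blast
    consider "n < dE" | "dE \<le> n" "n < dE + dS" | "dE + dS \<le> n" "n < dE + dS + dH"
      | "n = dE + dS + dH"
      using n by linarith
    then show ?thesis
    proof cases
      case 1
      then show ?thesis using score(1) b sgn_sign_mult_add[OF zn] by (simp add: h_def)
    next
      case 2
      then show ?thesis using score(2) b sgn_sign_mult_add[OF zn] by (simp add: h_def)
    next
      case 3
      then show ?thesis using score(3) b sgn_sign_mult_add[OF zn] by (simp add: h_def)
    next
      case 4
      then show ?thesis using score(4) \<open>sgn b = z (dE + dS + dH)\<close> by (simp add: h_def)
    qed
  qed
  ultimately show ?thesis
    unfolding P_def by blast
qed

theorem theorem2:
  fixes dE dS dH :: nat and CS CH aE aS aH :: real
  assumes "dE \<ge> 2" and "dS \<ge> 2" and "dH \<ge> 2"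
    and "CS > 0" and "CH < 0"
    and "aE > 0" and "aS > 0" and "aH > 0"
  shows "vc_dim_at_least (linear_classifiers dE dS CS dH CH aE aS aH)
           (prod_space_form dE dS CS dH CH) (dE + dS + dH + 1)"
proof (rule vc_dim_at_leastI[where P = "shattered_point dE dS CS dH CH"])
  show "shattered_point dE dS CS dH CH ` {..<dE + dS + dH + 1} \<subseteq> prod_space_form dE dS CS dH CH"
    using shattered_point_mem assms(4,5) by blast
  fix z :: "nat \<Rightarrow> real"
  assume "\<forall>n<dE + dS + dH + 1. z n = 1 \<or> z n = -1"
  then show "\<exists>h\<in>linear_classifiers dE dS CS dH CH aE aS aH.
               \<forall>n<dE + dS + dH + 1. h (shattered_point dE dS CS dH CH n) = z n"
    using shattered_point_labels_realised assms by simp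
qed

end
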